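(* Suppose Assumption A holds and Assumption B holds with $p=3$. Let $\{(x^k,m^k)\}_{k\ge0}$ be generated by Algorithm 1 with $q=2$, step sizes $\{\eta_k\}_{k\ge0}$, and parameters satisfying, for all $k\ge0$, $\theta_{k,1}/\gamma_{k,1}+\theta_{k,2}/\gamma_{k,2}=1$, $\theta_{k,1}/\gamma_{k,1}^2+\theta_{k,2}/\gamma_{k,2}^2=1$ and $\theta_{k,1}+\theta_{k,2}\in(0,1)$. Let $\{p_k\}_{k\ge0}$ be a positive sequence with \[ (1-\theta_{k,1}-\theta_{k,2})p_{k+1}\le\big(1-(\theta_{k,1}+\theta_{k,2})/2\big)p_k\qquad\forall k\ge0, \] and define $P_k=f(x^k)+p_k\|m^k-\nabla f(x^k)\|^2$. Then for all $k\ge0$, \[ \mathbb{E}_{\xi^{k+1}}[P_{k+1}]\le P_k-\eta_k\|\nabla f(x^k)\|+\frac{L_1}{2}\eta_k^2+\frac{2\eta_k^2}{(\theta_{k,1}+\theta_{k,2})p_k}+\frac{L_3^2\eta_k^6\theta_{k,1}^2p_{k+1}}{12\gamma_{k,1}^6(\theta_{k,1}+\theta_{k,2})}+\frac{L_3^2\eta_k^6\theta_{k,2}^2p_{k+1}}{12\gamma_{k,2}^6(\theta_{k,1}+\theta_{k,2})}+\frac{L_3^2\eta_k^6p_{k+1}}{12(\theta_{k,1}+\theta_{k,2})}+2(\theta_{k,1}^2+\theta_{k,2}^2)p_{k+1}\sigma^2 . \]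
   Context: Problem: minimize $f:\mathbb{R}^n\to\mathbb{R}$, where only a stochastic gradient estimator $G(\cdot;\xi)$ is accessible, $\xi$ being a random variable with sample space $\Xi$. $\|\cdot\|$ is the Euclidean norm. Assumption A: (a) there is a finite $f_{\mathrm{low}}$ with $f(x)\ge f_{\mathrm{low}}$ for all $x$; (b) there is $L_1>0$ with $\|\nabla f(y)-\nabla f(x)\|\le L_1\|y-x\|$ for all $x,y$; (c) $\mathbb{E}_\xi[G(x;\xi)]=\nabla f(x)$ and $\mathbb{E}_\xi[\|G(x;\xi)-\nabla f(x)\|^2]\le\sigma^2$ for all $x$, for some $\sigma>0$. Assumption B: $f$ is $p$ times continuously differentiable for some $p\ge2$ and there is $L_p>0$ with $\|D^pf(y)-D^pf(x)\|_{(p)}\le L_p\|y-x\|$ for all $x,y$, where $D^pf(x)$ is the $p$th derivative as a symmetric $p$-linear form and $\|\mathcal{T}\|_{(p)}=\max\{\mathcal{T}[h_1,\dots,h_p]:\|h_i\|\le 1\}$. Algorithm 1 (SFOM with multi-extrapolated momentum): inputs $x^0\in\mathbb{R}^n$, step sizes $\eta_k>0$, an integer $q\ge1$, extrapolation parameters $\gamma_{k,t}\in(0,1)$ and weighting parameters $\theta_{k,t}\in\mathbb{R}$ ($1\le t\le q$, $k\ge0$) with $\sum_{t=1}^q\theta_{k,t}\in(0,1)$ for all $k\ge0$. Initialize $x^{-1}=x^0$, $m^{-1}=0$, $(\gamma_{-1,t},\theta_{-1,t})=(1,1/q)$ for all $t$. For $k=0,1,2,\dots$: $z^{k,t}=x^k+\frac{1-\gamma_{k-1,t}}{\gamma_{k-1,t}}(x^k-x^{k-1})$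 for $1\le t\le q$; $m^k=(1-\sum_{t=1}^q\theta_{k-1,t})m^{k-1}+\sum_{t=1}^q\theta_{k-1,t}G(z^{k,t};\xi^k)$; $x^{k+1}=x^k-\eta_k m^k/\|m^k\|$. Here $\xi^0,\xi^1,\dots$ are independent samples of $\xi$ (and $m^k\neq0$ is implicitly assumed). $\mathbb{E}_{\xi^{k+1}}[\cdot]$ denotes expectation with respect to $\xi^{k+1}$ conditional on $\xi^0,\dots,\xi^k$. *)

theory Defs
  imports "HOL-Probability.Probability"
begin

definition tnorm3 :: "('a::real_normed_vector \<Rightarrow> 'a \<Rightarrow> 'a \<Rightarrow> real) \<Rightarrow> real" where
  "tnorm3 T = Sup {T h1 h2 h3 | h1 h2 h3. norm h1 \<le> 1 \<and> norm h2 \<le> 1 \<and> norm h3 \<le> 1}"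

text \<open>Parameters with index k-1, using the initialization (gamma_{-1,t}, theta_{-1,t}) = (1, 1/q).\<close>
definition gprev :: "(nat \<Rightarrow> nat \<Rightarrow> real) \<Rightarrow> nat \<Rightarrow> nat \<Rightarrow> real" where
  "gprev gam k t = (if k = 0 then 1 else gam (k - 1) t)"

definition thprev :: "nat \<Rightarrow> (nat \<Rightarrow> nat \<Rightarrow> real) \<Rightarrow> nat \<Rightarrow> nat \<Rightarrow> real" where
  "thprev q th k t = (if k = 0 then 1 / real q else th (k - 1) t)"

text \<open>State of Algorithm 1 before iteration k: (x^{k-1}, x^k, m^{k-1}),
  initialized as (x^0, x^0, 0). The sample path is xi :: nat => 's, xi k = xi^k.\<close>
fun sfom_state ::
  "('a::real_normed_vector \<Rightarrow> 's \<Rightarrow> 'a) \<Rightarrow> 'a \<Rightarrow> (nat \<Rightarrow> real) \<Rightarrow> nat \<Rightarrow>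
   (nat \<Rightarrow> nat \<Rightarrow> real) \<Rightarrow> (nat \<Rightarrow> nat \<Rightarrow> real) \<Rightarrow> (nat \<Rightarrow> 's) \<Rightarrow> nat \<Rightarrow> 'a \<times> 'a \<times> 'a" where
  "sfom_state G x0 eta q gam th xi 0 = (x0, x0, 0)"
| "sfom_state G x0 eta q gam th xi (Suc k) =
     (let (xp, x, mp) = sfom_state G x0 eta q gam th xi k;
          z = (\<lambda>t. x + ((1 - gprev gam k t) / gprev gam k t) *\<^sub>R (x - xp));
          m = (1 - (\<Sum>t=1..q. thprev q th k t)) *\<^sub>R mp
              + (\<Sum>t=1..q. thprev q th k t *\<^sub>R G (z t) (xi k))
      in (x, x - (eta k / norm m) *\<^sub>R m, m))"

definition sfom_x where
  "sfom_x G x0 eta q gam th xi k = fst (snd (sfom_state G x0 eta q gam th xi k))"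

definition sfom_m where
  "sfom_m G x0 eta q gam th xi k = snd (snd (sfom_state G x0 eta q gam th xi (Suc k)))"

end

theory Submission
  imports Defs
begin

text \<open>
  The potential combines the usual descent of normalized steps with a recursion for the
  momentum error. A normalized step of length \<open>\<eta>\<close> along \<open>m\<close> decreases \<open>f\<close> by
  \<open>\<eta> \<parallel>\<nabla>f\<parallel>\<close> up to \<open>2\<eta> \<parallel>m - \<nabla>f\<parallel>\<close> and the curvature term \<open>L\<^sub>1\<eta>\<^sup>2/2\<close>.
  The new momentum error is a contraction \<open>(1 - s)\<close> of the old one, plus a deterministic
  bias, plus zero-mean noise of variance at most \<open>2(\<theta>\<^sub>1\<^sup>2 + \<theta>\<^sub>2\<^sup>2)\<sigma>\<^sup>2\<close>.
  The two conditions on \<open>(\<theta>, \<gamma>)\<close> make the first- and second-order Taylor terms of the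
  bias cancel, so only third-order remainders survive and the bias is \<open>O(L\<^sub>3 \<eta>\<^sup>3)\<close>.
\<close>

lemma sq_sum3_le: "(u + v + w)\<^sup>2 \<le> 3 * (u\<^sup>2 + v\<^sup>2 + w\<^sup>2)" for u v w :: real
proof -
  have "3 * (u\<^sup>2 + v\<^sup>2 + w\<^sup>2) - (u + v + w)\<^sup>2 = (u - v)\<^sup>2 + (v - w)\<^sup>2 + (u - w)\<^sup>2"
    by (simp add: power2_eq_square algebra_simps)
  moreover have "0 \<le> (u - v)\<^sup>2 + (v - w)\<^sup>2 + (u - w)\<^sup>2" by simp
  ultimately show ?thesis by linarith
qed

lemma two_mult_le_weighted_squares:
  fixes a b c :: real
  assumes "0 < c"
  shows "2 * a * b \<le> c * a\<^sup>2 + b\<^sup>2 / c"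
proof -
  have "c * a\<^sup>2 + b\<^sup>2 / c - 2 * a * b = (c * a - b)\<^sup>2 / c"
    using assms by (simp add: field_simps power2_eq_square)
  moreover have "0 \<le> (c * a - b)\<^sup>2 / c" using assms by simp
  ultimately show ?thesis by linarith
qed

lemma sq_norm_scaleR_add_le:
  fixes u v :: "'a::real_normed_vector"
  shows "(norm (a *\<^sub>R u + b *\<^sub>R v))\<^sup>2 \<le> 2 * a\<^sup>2 * (norm u)\<^sup>2 + 2 * b\<^sup>2 * (norm v)\<^sup>2"
proof -
  have "norm (a *\<^sub>R u + b *\<^sub>R v) \<le> \<bar>a\<bar> * norm u + \<bar>b\<bar> * norm v"
    by (rule order_trans[OF norm_triangle_ineq]) simp
  then have "(norm (a *\<^sub>R u + b *\<^sub>R v))\<^sup>2 \<le> (\<bar>a\<bar> * norm u + \<bar>b\<bar> * norm v)\<^sup>2"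
    by (intro power_mono) auto
  also have "\<dots> \<le> 2 * (\<bar>a\<bar> * norm u)\<^sup>2 + 2 * (\<bar>b\<bar> * norm v)\<^sup>2"
    using two_mult_le_weighted_squares[of 1 "\<bar>a\<bar> * norm u" "\<bar>b\<bar> * norm v"]
    by (simp add: power2_eq_square algebra_simps)
  finally show ?thesis by (simp add: power_mult_distrib)
qed

text \<open>Convexity of the square, applied to \<open>(1 - s) \<parallel>u\<parallel> + s (\<parallel>v\<parallel> / s)\<close>.\<close>

lemma sq_norm_contraction_add_le:
  fixes u v :: "'a::real_normed_vector"
  assumes "0 < s" "s < 1"
  shows "(norm ((1 - s) *\<^sub>R u + v))\<^sup>2 \<le> (1 - s) * (norm u)\<^sup>2 + (norm v)\<^sup>2 / s"
proof -
  have "norm ((1 - s) *\<^sub>R u + v) \<le> (1 - s) * norm u + norm v"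
    using assms by (intro order_trans[OF norm_triangle_ineq]) simp
  then have "(norm ((1 - s) *\<^sub>R u + v))\<^sup>2 \<le> ((1 - s) * norm u + norm v)\<^sup>2"
    by (intro power_mono) (use assms in auto)
  also have "\<dots> = (1 - s) * (norm u)\<^sup>2 + (norm v)\<^sup>2 / s - (1 - s) * (s * norm u - norm v)\<^sup>2 / s"
    using assms by (simp add: field_simps power2_eq_square)
  also have "\<dots> \<le> (1 - s) * (norm u)\<^sup>2 + (norm v)\<^sup>2 / s"
    using assms by simp
  finally show ?thesis .
qed

lemma inner_normalized_ge:
  fixes g m :: "'a::real_inner"
  assumes "m \<noteq> 0"
  shows "norm g - 2 * norm (m - g) \<le> g \<bullet> m / norm m"
proof -
  have "g \<bullet> m = (norm m)\<^sup>2 - (m - g) \<bullet> m"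
    by (simp add: inner_diff_left power2_norm_eq_inner)
  moreover have "(m - g) \<bullet> m \<le> norm (m - g) * norm m" by (rule norm_cauchy_schwarz)
  ultimately have "(norm m - norm (m - g)) * norm m \<le> g \<bullet> m"
    by (simp add: power2_eq_square left_diff_distrib)
  then have "norm m - norm (m - g) \<le> g \<bullet> m / norm m"
    using assms by (simp add: pos_le_divide_eq)
  moreover have "norm g \<le> norm m + norm (m - g)"
    using norm_triangle_ineq4[of m "m - g"] by simp
  ultimately show ?thesis by simp
qed

section \<open>Taylor bounds along a line\<close>

lemma taylor2_remainder_le:
  fixes g g1 g2 :: "real \<Rightarrow> real" and K :: real
  assumes d1: "\<And>t. (g has_real_derivative g1 t) (at t)"
    and d2: "\<And>t. (g1 has_real_derivative g2 t) (at t)"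
    and b: "\<And>t. 0 \<le> t \<Longrightarrow> t \<le> 1 \<Longrightarrow> g2 t - g2 0 \<le> K * t"
  shows "g 1 - g 0 - g1 0 - g2 0 / 2 \<le> K / 6"
proof -
  define \<psi> where "\<psi> t = g1 t - g1 0 - t * g2 0 - K * t\<^sup>2 / 2" for t
  have \<psi>_nonpos: "\<psi> t \<le> 0" if "0 \<le> t" "t \<le> 1" for t
  proof -
    have "\<psi> t \<le> \<psi> 0"
    proof (rule DERIV_nonpos_imp_nonincreasing[OF that(1)])
      fix x assume x: "0 \<le> x" "x \<le> t"
      have "DERIV \<psi> x :> g2 x - g2 0 - K * x"
        unfolding \<psi>_def[abs_def] by (auto intro!: derivative_eq_intros d2)
      moreover have "g2 x - g2 0 - K * x \<le> 0" using b[of x] x that by auto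
      ultimately show "\<exists>y. DERIV \<psi> x :> y \<and> y \<le> 0" by blast
    qed
    then show ?thesis by (simp add: \<psi>_def)
  qed
  define \<phi> where "\<phi> t = g t - g 0 - t * g1 0 - t\<^sup>2 / 2 * g2 0 - K * t ^ 3 / 6" for t
  have "\<phi> 1 \<le> \<phi> 0"
  proof (rule DERIV_nonpos_imp_nonincreasing[of 0 1])
    fix x :: real assume x: "0 \<le> x" "x \<le> 1"
    have "DERIV \<phi> x :> \<psi> x"
      unfolding \<phi>_def[abs_def] \<psi>_def
      by (auto intro!: derivative_eq_intros d1 simp: power2_eq_square)
    then show "\<exists>y. DERIV \<phi> x :> y \<and> y \<le> 0" using \<psi>_nonpos[OF x] by blast
  qed simp
  then show ?thesis by (simp add: \<phi>_def)
qed

lemma taylor2_remainder_abs_le: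
  fixes g g1 g2 :: "real \<Rightarrow> real" and K :: real
  assumes d1: "\<And>t. (g has_real_derivative g1 t) (at t)"
    and d2: "\<And>t. (g1 has_real_derivative g2 t) (at t)"
    and b: "\<And>t. 0 \<le> t \<Longrightarrow> t \<le> 1 \<Longrightarrow> \<bar>g2 t - g2 0\<bar> \<le> K * t"
  shows "\<bar>g 1 - g 0 - g1 0 - g2 0 / 2\<bar> \<le> K / 6"
proof -
  have "g 1 - g 0 - g1 0 - g2 0 / 2 \<le> K / 6"
    by (rule taylor2_remainder_le[OF d1 d2]) (use b in fastforce)
  moreover have "(- g) 1 - (- g) 0 - (- g1) 0 - (- g2) 0 / 2 \<le> K / 6"
    by (rule taylor2_remainder_le[of "-g" "-g1" "-g2"])
       (auto intro!: derivative_eq_intros d1 d2 dest!: b simp: fun_Compl_def)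
  ultimately show ?thesis unfolding abs_le_iff by (simp add: fun_Compl_def)
qed

lemma has_real_derivative_along_line:
  fixes F :: "'a::real_normed_vector \<Rightarrow> real"
  assumes d: "\<And>y. (F has_derivative (\<lambda>h. F' y h)) (at y)"
  shows "((\<lambda>t. F (x + t *\<^sub>R w)) has_real_derivative F' (x + t *\<^sub>R w) w) (at t)"
proof -
  have "((\<lambda>t. x + t *\<^sub>R w) has_derivative (\<lambda>s. s *\<^sub>R w)) (at t)"
    by (auto intro!: derivative_eq_intros)
  from has_derivative_compose[OF this d[of "x + t *\<^sub>R w"]]
  have "((\<lambda>t. F (x + t *\<^sub>R w)) has_derivative (\<lambda>s. F' (x + t *\<^sub>R w) (s *\<^sub>R w))) (at t)"
    by (simp add: o_def)
  moreover have "bounded_linear (F' (x + t *\<^sub>R w))"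
    using d[of "x + t *\<^sub>R w"] has_derivative_bounded_linear by (metis eta_contract_eq)
  then have "(\<lambda>s. F' (x + t *\<^sub>R w) (s *\<^sub>R w)) = (*) (F' (x + t *\<^sub>R w) w)"
    by (intro ext) (simp add: linear_simps mult.commute)
  ultimately show ?thesis by (simp add: has_field_derivative_def)
qed

lemma lipschitz_gradient_upper_bound:
  fixes f :: "'a::real_inner \<Rightarrow> real"
  assumes grad: "\<forall>x. (f has_derivative (\<lambda>h. gradf x \<bullet> h)) (at x)"
    and lip: "\<forall>x y. norm (gradf y - gradf x) \<le> L * norm (y - x)"
  shows "f (x + w) \<le> f x + gradf x \<bullet> w + L / 2 * (norm w)\<^sup>2"
proof -
  define \<phi> where "\<phi> t = f (x + t *\<^sub>R w) - t * (gradf x \<bullet> w) - L / 2 * t\<^sup>2 * (norm w)\<^sup>2" for t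
  have "\<phi> 1 \<le> \<phi> 0"
  proof (rule DERIV_nonpos_imp_nonincreasing[of 0 1])
    fix t :: real assume t: "0 \<le> t" "t \<le> 1"
    have d: "DERIV \<phi> t :> (gradf (x + t *\<^sub>R w) - gradf x) \<bullet> w - L * t * (norm w)\<^sup>2"
      unfolding \<phi>_def[abs_def]
      by (rule derivative_eq_intros has_real_derivative_along_line[where F'="\<lambda>y h. gradf y \<bullet> h"]
            refl grad[rule_format])+
         (simp add: power2_eq_square algebra_simps inner_diff_left)
    have "(gradf (x + t *\<^sub>R w) - gradf x) \<bullet> w \<le> norm (gradf (x + t *\<^sub>R w) - gradf x) * norm w"
      by (rule norm_cauchy_schwarz)
    also have "\<dots> \<le> L * norm (t *\<^sub>R w) * norm w"
      using lip[rule_format, of x "x + t *\<^sub>R w"] by (intro mult_right_mono) (auto simp: norm_minus_commute)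
    also have "\<dots> = L * t * (norm w)\<^sup>2" using t by (simp add: power2_eq_square)
    finally show "\<exists>y. DERIV \<phi> t :> y \<and> y \<le> 0" using d by auto
  qed simp
  then show ?thesis by (simp add: \<phi>_def)
qed

lemma normalized_step_descent:
  fixes f :: "'a::real_inner \<Rightarrow> real"
  assumes grad: "\<forall>x. (f has_derivative (\<lambda>h. gradf x \<bullet> h)) (at x)"
    and lip: "\<forall>x y. norm (gradf y - gradf x) \<le> L * norm (y - x)"
    and "m \<noteq> 0" "0 \<le> \<eta>"
  shows "f (x - (\<eta> / norm m) *\<^sub>R m)
    \<le> f x - \<eta> * norm (gradf x) + 2 * \<eta> * norm (m - gradf x) + L / 2 * \<eta>\<^sup>2"
proof -
  have "f (x + (- (\<eta> / norm m) *\<^sub>R m))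
      \<le> f x + gradf x \<bullet> (- (\<eta> / norm m) *\<^sub>R m) + L / 2 * (norm (- (\<eta> / norm m) *\<^sub>R m))\<^sup>2"
    by (rule lipschitz_gradient_upper_bound[OF grad lip])
  moreover have "gradf x \<bullet> (- (\<eta> / norm m) *\<^sub>R m) = - \<eta> * (gradf x \<bullet> m / norm m)" by simp
  moreover have "\<eta> * (norm (gradf x) - 2 * norm (m - gradf x)) \<le> \<eta> * (gradf x \<bullet> m / norm m)"
    using inner_normalized_ge[OF \<open>m \<noteq> 0\<close>] \<open>0 \<le> \<eta>\<close> by (intro mult_left_mono) auto
  moreover have "norm (- (\<eta> / norm m) *\<^sub>R m) = \<eta>" using assms(3,4) by simp
  ultimately show ?thesis by (simp add: algebra_simps)
qed

lemma has_derivative_linear_in_parameter: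
  fixes \<Phi> :: "'b::real_vector \<Rightarrow> 'a::real_normed_vector \<Rightarrow> real"
  assumes d: "\<And>a. (\<Phi> a has_derivative (\<lambda>h. \<Psi> a h)) (at x)"
    and l: "\<And>y. linear (\<lambda>a. \<Phi> a y)"
  shows "linear (\<lambda>a. \<Psi> a h)"
proof (rule linearI)
  fix a b
  have "\<Phi> (a + b) = (\<lambda>y. \<Phi> a y + \<Phi> b y)"
    using l[THEN linear_add] by (intro ext) simp
  then have "(\<Phi> (a + b) has_derivative (\<lambda>h. \<Psi> a h + \<Psi> b h)) (at x)"
    by (simp add: has_derivative_add d)
  from has_derivative_unique[OF d[of "a + b"] this]
  show "\<Psi> (a + b) h = \<Psi> a h + \<Psi> b h" by metis
next
  fix c :: real and a
  have "\<Phi> (c *\<^sub>R a) = (\<lambda>y. c * \<Phi> a y)"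
    using l[THEN linear_scale] by (intro ext) simp
  then have "(\<Phi> (c *\<^sub>R a) has_derivative (\<lambda>h. c * \<Psi> a h)) (at x)"
    by (simp add: has_derivative_mult_right d)
  from has_derivative_unique[OF d[of "c *\<^sub>R a"] this]
  show "\<Psi> (c *\<^sub>R a) h = c *\<^sub>R \<Psi> a h" by (metis real_scaleR_def)
qed

lemma linear_abs_le_sum_Basis:
  fixes g :: "'a::euclidean_space \<Rightarrow> real"
  assumes "linear g" "norm h \<le> 1"
  shows "\<bar>g h\<bar> \<le> (\<Sum>b\<in>Basis. \<bar>g b\<bar>)"
proof -
  have "g h = g (\<Sum>b\<in>Basis. (h \<bullet> b) *\<^sub>R b)" by (simp add: euclidean_representation)
  also have "\<dots> = (\<Sum>b\<in>Basis. (h \<bullet> b) * g b)"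
    using assms(1) by (simp add: linear_sum linear_scale)
  finally have "\<bar>g h\<bar> \<le> (\<Sum>b\<in>Basis. \<bar>h \<bullet> b\<bar> * \<bar>g b\<bar>)"
    by (simp add: abs_mult[symmetric] sum_abs)
  also have "\<dots> \<le> (\<Sum>b\<in>Basis. 1 * \<bar>g b\<bar>)"
    using assms(2) by (intro sum_mono mult_right_mono order_trans[OF Basis_le_norm]) auto
  finally show ?thesis by simp
qed

lemma trilinear_abs_le_sum_Basis:
  fixes T :: "'a::euclidean_space \<Rightarrow> 'a \<Rightarrow> 'a \<Rightarrow> real"
  assumes l1: "\<And>y z. linear (\<lambda>a. T a y z)" and l2: "\<And>y z. linear (\<lambda>a. T y a z)"
    and l3: "\<And>y z. linear (\<lambda>a. T y z a)"
    and n: "norm h1 \<le> 1" "norm h2 \<le> 1" "norm h3 \<le> 1"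
  shows "\<bar>T h1 h2 h3\<bar> \<le> (\<Sum>i\<in>Basis. \<Sum>j\<in>Basis. \<Sum>l\<in>Basis. \<bar>T i j l\<bar>)"
proof -
  have "\<bar>T h1 h2 h3\<bar> \<le> (\<Sum>i\<in>Basis. \<bar>T i h2 h3\<bar>)"
    by (rule linear_abs_le_sum_Basis[OF l1 n(1)])
  also have "\<dots> \<le> (\<Sum>i\<in>Basis. \<Sum>j\<in>Basis. \<bar>T i j h3\<bar>)"
    by (intro sum_mono linear_abs_le_sum_Basis[OF l2 n(2)])
  also have "\<dots> \<le> (\<Sum>i\<in>Basis. \<Sum>j\<in>Basis. \<Sum>l\<in>Basis. \<bar>T i j l\<bar>)"
    by (intro sum_mono linear_abs_le_sum_Basis[OF l3 n(3)])
  finally show ?thesis .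
qed

lemma tnorm3_upper:
  fixes T :: "'a::euclidean_space \<Rightarrow> 'a \<Rightarrow> 'a \<Rightarrow> real"
  assumes l1: "\<And>y z. linear (\<lambda>a. T a y z)" and l2: "\<And>y z. linear (\<lambda>a. T y a z)"
    and l3: "\<And>y z. linear (\<lambda>a. T y z a)"
    and n: "norm h1 \<le> 1" "norm h2 \<le> 1" "norm h3 \<le> 1"
  shows "T h1 h2 h3 \<le> tnorm3 T"
proof -
  have "bdd_above {T h1 h2 h3 | h1 h2 h3. norm h1 \<le> 1 \<and> norm h2 \<le> 1 \<and> norm h3 \<le> 1}"
    using trilinear_abs_le_sum_Basis[OF l1 l2 l3]
    by (auto intro!: bdd_aboveI dest: abs_le_D1)
  then show ?thesis unfolding tnorm3_def
    by (intro cSup_upper) (use n in blast)+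
qed

text \<open>
  With \<open>x'\<close>, \<open>x\<close> the iterates \<open>x\<^sup>k\<^sup>+\<^sup>1\<close>, \<open>x\<^sup>k\<close>, the point \<open>extrap \<gamma> x' x\<close> is the
  extrapolated point \<open>z\<close> of Algorithm 1, and \<open>extrap_bias\<close> is the deterministic part of
  \<open>m\<^sup>k\<^sup>+\<^sup>1 - \<nabla>f(x\<^sup>k\<^sup>+\<^sup>1)\<close> not inherited from \<open>m\<^sup>k - \<nabla>f(x\<^sup>k)\<close>.
\<close>

definition extrap :: "real \<Rightarrow> 'a \<Rightarrow> 'a \<Rightarrow> 'a::real_vector" where
  "extrap \<gamma> x' x = x' + ((1 - \<gamma>) / \<gamma>) *\<^sub>R (x' - x)"

definition extrap_bias ::
  "('a \<Rightarrow> 'a::real_vector) \<Rightarrow> real \<Rightarrow> real \<Rightarrow> real \<Rightarrow> real \<Rightarrow> 'a \<Rightarrow> 'a \<Rightarrow> 'a" where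
  "extrap_bias gradf \<theta>\<^sub>1 \<theta>\<^sub>2 \<gamma>\<^sub>1 \<gamma>\<^sub>2 x' x =
     \<theta>\<^sub>1 *\<^sub>R gradf (extrap \<gamma>\<^sub>1 x' x) + \<theta>\<^sub>2 *\<^sub>R gradf (extrap \<gamma>\<^sub>2 x' x)
     + (1 - (\<theta>\<^sub>1 + \<theta>\<^sub>2)) *\<^sub>R gradf x - gradf x'"

lemma extrap_moments:
  fixes \<theta>\<^sub>1 \<theta>\<^sub>2 \<gamma>\<^sub>1 \<gamma>\<^sub>2 :: real
  defines "a\<^sub>1 \<equiv> (1 - \<gamma>\<^sub>1) / \<gamma>\<^sub>1" and "a\<^sub>2 \<equiv> (1 - \<gamma>\<^sub>2) / \<gamma>\<^sub>2" and "s \<equiv> \<theta>\<^sub>1 + \<theta>\<^sub>2"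
  assumes "\<gamma>\<^sub>1 \<noteq> 0" "\<gamma>\<^sub>2 \<noteq> 0"
    and c1: "\<theta>\<^sub>1 / \<gamma>\<^sub>1 + \<theta>\<^sub>2 / \<gamma>\<^sub>2 = 1" and c2: "\<theta>\<^sub>1 / \<gamma>\<^sub>1\<^sup>2 + \<theta>\<^sub>2 / \<gamma>\<^sub>2\<^sup>2 = 1"
  shows "\<theta>\<^sub>1 * a\<^sub>1 + \<theta>\<^sub>2 * a\<^sub>2 = 1 - s" and "\<theta>\<^sub>1 * a\<^sub>1\<^sup>2 + \<theta>\<^sub>2 * a\<^sub>2\<^sup>2 = s - 1"
proof -
  have a: "a\<^sub>1 = 1 / \<gamma>\<^sub>1 - 1" "a\<^sub>2 = 1 / \<gamma>\<^sub>2 - 1"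
    using assms(4,5) by (simp_all add: a\<^sub>1_def a\<^sub>2_def diff_divide_distrib)
  have "\<theta>\<^sub>1 * a\<^sub>1 + \<theta>\<^sub>2 * a\<^sub>2 = (\<theta>\<^sub>1 / \<gamma>\<^sub>1 + \<theta>\<^sub>2 / \<gamma>\<^sub>2) - s"
    unfolding a s_def by (simp add: algebra_simps)
  then show "\<theta>\<^sub>1 * a\<^sub>1 + \<theta>\<^sub>2 * a\<^sub>2 = 1 - s" using c1 by simp
  have "\<theta>\<^sub>1 * a\<^sub>1\<^sup>2 + \<theta>\<^sub>2 * a\<^sub>2\<^sup>2 = (\<theta>\<^sub>1 / \<gamma>\<^sub>1\<^sup>2 + \<theta>\<^sub>2 / \<gamma>\<^sub>2\<^sup>2) - 2 * (\<theta>\<^sub>1 / \<gamma>\<^sub>1 + \<theta>\<^sub>2 / \<gamma>\<^sub>2) + s"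
    unfolding a s_def by (simp add: algebra_simps power2_eq_square)
  then show "\<theta>\<^sub>1 * a\<^sub>1\<^sup>2 + \<theta>\<^sub>2 * a\<^sub>2\<^sup>2 = s - 1" using c1 c2 by simp
qed

lemma extrap_remainder_sq_le:
  fixes \<theta>\<^sub>1 \<theta>\<^sub>2 \<gamma>\<^sub>1 \<gamma>\<^sub>2 K s :: real
  assumes "0 < \<gamma>\<^sub>1" "\<gamma>\<^sub>1 < 1" "0 < \<gamma>\<^sub>2" "\<gamma>\<^sub>2 < 1" "0 < s" "s < 1"
  shows "(\<bar>\<theta>\<^sub>1\<bar> * (K * ((1 - \<gamma>\<^sub>1) / \<gamma>\<^sub>1) ^ 3) + \<bar>\<theta>\<^sub>2\<bar> * (K * ((1 - \<gamma>\<^sub>2) / \<gamma>\<^sub>2) ^ 3) + (1 - s) * K)\<^sup>2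
    \<le> 3 * K\<^sup>2 * (\<theta>\<^sub>1\<^sup>2 / \<gamma>\<^sub>1 ^ 6 + \<theta>\<^sub>2\<^sup>2 / \<gamma>\<^sub>2 ^ 6 + 1)"
proof -
  have pow6: "\<theta>\<^sup>2 * ((1 - \<gamma>) / \<gamma>) ^ 6 \<le> \<theta>\<^sup>2 / \<gamma> ^ 6" if "0 < \<gamma>" "\<gamma> < 1" for \<theta> \<gamma> :: real
  proof -
    have "((1 - \<gamma>) / \<gamma>) ^ 6 \<le> (1 / \<gamma>) ^ 6"
      using that by (intro power_mono divide_right_mono) auto
    then have "\<theta>\<^sup>2 * ((1 - \<gamma>) / \<gamma>) ^ 6 \<le> \<theta>\<^sup>2 * (1 / \<gamma>) ^ 6" by (rule mult_left_mono) simp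
    then show ?thesis by (simp add: power_one_over)
  qed
  have "(1 - s)\<^sup>2 \<le> 1" using assms(5,6) by (simp add: power2_eq_square mult_le_one)
  then have "3 * K\<^sup>2 * (\<theta>\<^sub>1\<^sup>2 * ((1 - \<gamma>\<^sub>1) / \<gamma>\<^sub>1) ^ 6 + \<theta>\<^sub>2\<^sup>2 * ((1 - \<gamma>\<^sub>2) / \<gamma>\<^sub>2) ^ 6 + (1 - s)\<^sup>2)
      \<le> 3 * K\<^sup>2 * (\<theta>\<^sub>1\<^sup>2 / \<gamma>\<^sub>1 ^ 6 + \<theta>\<^sub>2\<^sup>2 / \<gamma>\<^sub>2 ^ 6 + 1)"
    using pow6[OF assms(1,2), of \<theta>\<^sub>1] pow6[OF assms(3,4), of \<theta>\<^sub>2] by (intro mult_left_mono) auto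
  moreover have "(\<bar>\<theta>\<bar> * (K * a ^ 3))\<^sup>2 = K\<^sup>2 * (\<theta>\<^sup>2 * a ^ 6)" for \<theta> a :: real
    by (simp add: power_mult_distrib power2_abs flip: power_mult)
  moreover have "((1 - s) * K)\<^sup>2 = K\<^sup>2 * (1 - s)\<^sup>2" by (simp add: power_mult_distrib)
  moreover note sq_sum3_le[of "\<bar>\<theta>\<^sub>1\<bar> * (K * ((1 - \<gamma>\<^sub>1) / \<gamma>\<^sub>1) ^ 3)"
      "\<bar>\<theta>\<^sub>2\<bar> * (K * ((1 - \<gamma>\<^sub>2) / \<gamma>\<^sub>2) ^ 3)" "(1 - s) * K"]
  ultimately show ?thesis by (simp add: distrib_left)
qed

section \<open>Third-order smoothness and the extrapolation bias\<close>

context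
  fixes gradf :: "'a::euclidean_space \<Rightarrow> 'a"
    and D2 :: "'a \<Rightarrow> 'a \<Rightarrow> 'a \<Rightarrow> real" and D3 :: "'a \<Rightarrow> 'a \<Rightarrow> 'a \<Rightarrow> 'a \<Rightarrow> real"
    and L3 :: real
  assumes D2: "\<forall>x h1. ((\<lambda>y. gradf y \<bullet> h1) has_derivative (\<lambda>h. D2 x h1 h)) (at x)"
    and D3: "\<forall>x h1 h2. ((\<lambda>y. D2 y h1 h2) has_derivative (\<lambda>h. D3 x h1 h2 h)) (at x)"
    and D3_lip: "\<forall>x y. tnorm3 (\<lambda>h1 h2 h3. D3 y h1 h2 h3 - D3 x h1 h2 h3) \<le> L3 * norm (y - x)"
begin

lemma D2_linear2: "linear (\<lambda>a. D2 x h a)"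
  using D2 has_derivative_bounded_linear bounded_linear.linear by blast

lemma D2_linear1: "linear (\<lambda>a. D2 x a h)"
  by (rule has_derivative_linear_in_parameter[where \<Phi>="\<lambda>a y. gradf y \<bullet> a"])
     (use D2 in \<open>auto intro: bounded_linear.linear[OF bounded_linear_inner_right]\<close>)

lemma D3_linear3: "linear (\<lambda>a. D3 x h1 h2 a)"
  using D3 has_derivative_bounded_linear bounded_linear.linear by blast

lemma D3_linear1: "linear (\<lambda>a. D3 x a h2 h)"
  by (rule has_derivative_linear_in_parameter[where \<Phi>="\<lambda>a y. D2 y a h2"]) (use D3 D2_linear1 in auto)

lemma D3_linear2: "linear (\<lambda>a. D3 x h1 a h)"
  by (rule has_derivative_linear_in_parameter[where \<Phi>="\<lambda>a y. D2 y h1 a"]) (use D3 D2_linear2 in auto)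

lemma D3_diff_le:
  assumes h: "norm h \<le> 1"
  shows "D3 y h w w - D3 x h w w \<le> L3 * norm (y - x) * (norm w)\<^sup>2"
proof (cases "w = 0")
  case True
  then show ?thesis using D3_linear3[of x h 0] D3_linear3[of y h 0] by (simp add: linear_0)
next
  case False
  define u where "u = w /\<^sub>R norm w"
  have nu: "norm u \<le> 1" using False by (simp add: u_def)
  have scale: "D3 z h w w = (norm w)\<^sup>2 * D3 z h u u" for z
  proof -
    have "w = norm w *\<^sub>R u" using False by (simp add: u_def)
    then have "D3 z h w w = D3 z h (norm w *\<^sub>R u) (norm w *\<^sub>R u)" by simp
    also have "\<dots> = norm w * (norm w * D3 z h u u)"
      using linear_scale[OF D3_linear2[of z h "norm w *\<^sub>R u"], of "norm w" u]
            linear_scale[OF D3_linear3[of z h u], of "norm w" u] by simp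
    finally show ?thesis by (simp add: power2_eq_square)
  qed
  have "D3 y h u u - D3 x h u u \<le> tnorm3 (\<lambda>h1 h2 h3. D3 y h1 h2 h3 - D3 x h1 h2 h3)"
    by (rule tnorm3_upper[where T="\<lambda>h1 h2 h3. D3 y h1 h2 h3 - D3 x h1 h2 h3"])
       (auto intro!: linear_compose_sub D3_linear1 D3_linear2 D3_linear3 simp: h nu)
  also have "\<dots> \<le> L3 * norm (y - x)" using D3_lip by blast
  finally have "(norm w)\<^sup>2 * (D3 y h u u - D3 x h u u) \<le> (norm w)\<^sup>2 * (L3 * norm (y - x))"
    by (intro mult_left_mono) auto
  then show ?thesis by (simp add: scale algebra_simps)
qed

lemma gradient_taylor2_abs_le:
  assumes h: "norm h \<le> 1"
  shows "\<bar>gradf (y + w) \<bullet> h - gradf y \<bullet> h - D2 y h w - D3 y h w w / 2\<bar> \<le> L3 * (norm w) ^ 3 / 6"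
proof -
  have "\<bar>(\<lambda>t. gradf (y + t *\<^sub>R w) \<bullet> h) 1 - (\<lambda>t. gradf (y + t *\<^sub>R w) \<bullet> h) 0
        - (\<lambda>t. D2 (y + t *\<^sub>R w) h w) 0 - (\<lambda>t. D3 (y + t *\<^sub>R w) h w w) 0 / 2\<bar>
        \<le> (L3 * (norm w) ^ 3) / 6"
  proof (rule taylor2_remainder_abs_le)
    show "((\<lambda>t. gradf (y + t *\<^sub>R w) \<bullet> h) has_real_derivative D2 (y + t *\<^sub>R w) h w) (at t)" for t
      by (rule has_real_derivative_along_line[where F'="\<lambda>z v. D2 z h v"]) (use D2 in blast)
    show "((\<lambda>t. D2 (y + t *\<^sub>R w) h w) has_real_derivative D3 (y + t *\<^sub>R w) h w w) (at t)" for t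
      by (rule has_real_derivative_along_line[where F'="\<lambda>z v. D3 z h w v"]) (use D3 in blast)
    fix t :: real assume t: "0 \<le> t" "t \<le> 1"
    have "D3 (y + t *\<^sub>R w) h w w - D3 y h w w \<le> L3 * norm w ^ 3 * t"
      and "D3 y h w w - D3 (y + t *\<^sub>R w) h w w \<le> L3 * norm w ^ 3 * t"
      using D3_diff_le[OF h, of "y + t *\<^sub>R w" w y] D3_diff_le[OF h, of y w "y + t *\<^sub>R w"] t
      by (simp_all add: norm_minus_commute power2_eq_square power3_eq_cube algebra_simps)
    then show "\<bar>D3 (y + t *\<^sub>R w) h w w - D3 (y + 0 *\<^sub>R w) h w w\<bar> \<le> L3 * norm w ^ 3 * t"
      by (simp add: abs_le_iff)
  qed
  then show ?thesis by simp
qed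

lemma gradient_taylor2_scaled_abs_le:
  assumes h: "norm h \<le> 1"
  shows "\<bar>gradf (y + c *\<^sub>R d) \<bullet> h - gradf y \<bullet> h - c * D2 y h d - c\<^sup>2 * D3 y h d d / 2\<bar>
    \<le> L3 * norm d ^ 3 / 6 * \<bar>c\<bar> ^ 3"
proof -
  have "D2 y h (c *\<^sub>R d) = c * D2 y h d"
    using linear_scale[OF D2_linear2[of y h], of c d] by simp
  moreover have "D3 y h (c *\<^sub>R d) (c *\<^sub>R d) = c\<^sup>2 * D3 y h d d"
    using linear_scale[OF D3_linear2[of y h "c *\<^sub>R d"], of c d] linear_scale[OF D3_linear3[of y h d], of c d]
    by (simp add: power2_eq_square)
  ultimately show ?thesis
    using gradient_taylor2_abs_le[OF h, of y "c *\<^sub>R d"] by (simp add: power_mult_distrib mult_ac)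
qed

text \<open>
  Expanding \<open>\<nabla>f\<close> around \<open>x'\<close> at the three points \<open>x' + a (x' - x)\<close> with
  \<open>a = a\<^sub>1, a\<^sub>2, -1\<close>, the constant terms cancel by construction and the first- and
  second-order terms by \<open>extrap_moments\<close>; only the third-order remainders are left.
\<close>

lemma extrap_bias_norm_le:
  fixes x x' :: 'a and \<theta>\<^sub>1 \<theta>\<^sub>2 \<gamma>\<^sub>1 \<gamma>\<^sub>2 :: real
  assumes "0 < \<gamma>\<^sub>1" "\<gamma>\<^sub>1 < 1" "0 < \<gamma>\<^sub>2" "\<gamma>\<^sub>2 < 1" "\<theta>\<^sub>1 + \<theta>\<^sub>2 \<le> 1"
    and c1: "\<theta>\<^sub>1 / \<gamma>\<^sub>1 + \<theta>\<^sub>2 / \<gamma>\<^sub>2 = 1" and c2: "\<theta>\<^sub>1 / \<gamma>\<^sub>1\<^sup>2 + \<theta>\<^sub>2 / \<gamma>\<^sub>2\<^sup>2 = 1"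
  defines "K \<equiv> L3 * norm (x' - x) ^ 3 / 6"
  shows "norm (extrap_bias gradf \<theta>\<^sub>1 \<theta>\<^sub>2 \<gamma>\<^sub>1 \<gamma>\<^sub>2 x' x)
    \<le> \<bar>\<theta>\<^sub>1\<bar> * (K * ((1 - \<gamma>\<^sub>1) / \<gamma>\<^sub>1) ^ 3) + \<bar>\<theta>\<^sub>2\<bar> * (K * ((1 - \<gamma>\<^sub>2) / \<gamma>\<^sub>2) ^ 3)
      + (1 - (\<theta>\<^sub>1 + \<theta>\<^sub>2)) * K"
proof -
  define B where "B = extrap_bias gradf \<theta>\<^sub>1 \<theta>\<^sub>2 \<gamma>\<^sub>1 \<gamma>\<^sub>2 x' x"
  define s where "s = \<theta>\<^sub>1 + \<theta>\<^sub>2"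
  define d where "d = x' - x"
  define a\<^sub>1 where "a\<^sub>1 = (1 - \<gamma>\<^sub>1) / \<gamma>\<^sub>1"
  define a\<^sub>2 where "a\<^sub>2 = (1 - \<gamma>\<^sub>2) / \<gamma>\<^sub>2"
  define h where "h = sgn B"
  have nh: "norm h \<le> 1" by (simp add: h_def norm_sgn)
  define r where "r c = gradf (x' + c *\<^sub>R d) \<bullet> h - gradf x' \<bullet> h - c * D2 x' h d - c\<^sup>2 * D3 x' h d d / 2"
    for c
  have r_le: "\<bar>r c\<bar> \<le> K * \<bar>c\<bar> ^ 3" for c
    using gradient_taylor2_scaled_abs_le[OF nh, of x' c d] by (simp add: r_def K_def d_def)
  have moments: "\<theta>\<^sub>1 * a\<^sub>1 + \<theta>\<^sub>2 * a\<^sub>2 = 1 - s" "\<theta>\<^sub>1 * a\<^sub>1\<^sup>2 + \<theta>\<^sub>2 * a\<^sub>2\<^sup>2 = s - 1"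
    using extrap_moments[OF _ _ c1 c2] assms(1,3) unfolding a\<^sub>1_def a\<^sub>2_def s_def by auto
  have expand: "gradf (x' + c *\<^sub>R d) \<bullet> h
      = gradf x' \<bullet> h + c * D2 x' h d + c\<^sup>2 * D3 x' h d d / 2 + r c" for c
    by (simp add: r_def)
  have "x' + (-1) *\<^sub>R d = x" by (simp add: d_def)
  then have expand_x: "gradf x \<bullet> h = gradf x' \<bullet> h - D2 x' h d + D3 x' h d d / 2 + r (-1)"
    using expand[of "-1"] by simp
  have "norm B = B \<bullet> h"
  proof (cases "B = 0")
    case False then show ?thesis by (simp add: h_def sgn_div_norm dot_square_norm power2_eq_square)
  qed (simp add: h_def)
  also have "\<dots> = \<theta>\<^sub>1 * (gradf (x' + a\<^sub>1 *\<^sub>R d) \<bullet> h) + \<theta>\<^sub>2 * (gradf (x' + a\<^sub>2 *\<^sub>R d) \<bullet> h)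
      + (1 - s) * (gradf x \<bullet> h) - gradf x' \<bullet> h"
    by (simp add: B_def extrap_bias_def extrap_def a\<^sub>1_def a\<^sub>2_def d_def s_def inner_add_left inner_diff_left)
  also have "\<dots> = \<theta>\<^sub>1 * r a\<^sub>1 + \<theta>\<^sub>2 * r a\<^sub>2 + (1 - s) * r (-1)
      + (\<theta>\<^sub>1 * a\<^sub>1 + \<theta>\<^sub>2 * a\<^sub>2 - (1 - s)) * D2 x' h d
      + (\<theta>\<^sub>1 * a\<^sub>1\<^sup>2 + \<theta>\<^sub>2 * a\<^sub>2\<^sup>2 + (1 - s)) * D3 x' h d d / 2"
    unfolding expand expand_x s_def by (simp add: field_simps)
  also have "\<dots> = \<theta>\<^sub>1 * r a\<^sub>1 + \<theta>\<^sub>2 * r a\<^sub>2 + (1 - s) * r (-1)" unfolding moments by simp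
  also have "\<dots> \<le> \<bar>\<theta>\<^sub>1\<bar> * (K * a\<^sub>1 ^ 3) + \<bar>\<theta>\<^sub>2\<bar> * (K * a\<^sub>2 ^ 3) + (1 - s) * K"
  proof -
    have weighted: "\<theta> * r a \<le> \<bar>\<theta>\<bar> * (K * a ^ 3)" if "0 \<le> a" for \<theta> a
    proof -
      have "\<theta> * r a \<le> \<bar>\<theta>\<bar> * \<bar>r a\<bar>" by (metis abs_ge_self abs_mult)
      also have "\<dots> \<le> \<bar>\<theta>\<bar> * (K * a ^ 3)" using r_le[of a] that by (intro mult_left_mono) auto
      finally show ?thesis .
    qed
    have "0 \<le> a\<^sub>1" "0 \<le> a\<^sub>2" using assms(1-4) by (simp_all add: a\<^sub>1_def a\<^sub>2_def)
    moreover have "(1 - s) * r (-1) \<le> (1 - s) * K"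
      using r_le[of "-1"] assms(5) unfolding s_def by (intro mult_left_mono) auto
    ultimately show ?thesis using weighted[of a\<^sub>1 \<theta>\<^sub>1] weighted[of a\<^sub>2 \<theta>\<^sub>2] by linarith
  qed
  finally show ?thesis unfolding B_def a\<^sub>1_def a\<^sub>2_def s_def .
qed

lemma extrap_bias_sq_le:
  assumes "0 < \<gamma>\<^sub>1" "\<gamma>\<^sub>1 < 1" "0 < \<gamma>\<^sub>2" "\<gamma>\<^sub>2 < 1" "0 < \<theta>\<^sub>1 + \<theta>\<^sub>2" "\<theta>\<^sub>1 + \<theta>\<^sub>2 < 1"
    and "\<theta>\<^sub>1 / \<gamma>\<^sub>1 + \<theta>\<^sub>2 / \<gamma>\<^sub>2 = 1" "\<theta>\<^sub>1 / \<gamma>\<^sub>1\<^sup>2 + \<theta>\<^sub>2 / \<gamma>\<^sub>2\<^sup>2 = 1" "0 < L3"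
  shows "(norm (extrap_bias gradf \<theta>\<^sub>1 \<theta>\<^sub>2 \<gamma>\<^sub>1 \<gamma>\<^sub>2 x' x))\<^sup>2
    \<le> L3\<^sup>2 * norm (x' - x) ^ 6 / 12 * (\<theta>\<^sub>1\<^sup>2 / \<gamma>\<^sub>1 ^ 6 + \<theta>\<^sub>2\<^sup>2 / \<gamma>\<^sub>2 ^ 6 + 1)"
proof -
  define K where "K = L3 * norm (x' - x) ^ 3 / 6"
  have "(norm (extrap_bias gradf \<theta>\<^sub>1 \<theta>\<^sub>2 \<gamma>\<^sub>1 \<gamma>\<^sub>2 x' x))\<^sup>2
      \<le> (\<bar>\<theta>\<^sub>1\<bar> * (K * ((1 - \<gamma>\<^sub>1) / \<gamma>\<^sub>1) ^ 3) + \<bar>\<theta>\<^sub>2\<bar> * (K * ((1 - \<gamma>\<^sub>2) / \<gamma>\<^sub>2) ^ 3)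
         + (1 - (\<theta>\<^sub>1 + \<theta>\<^sub>2)) * K)\<^sup>2"
    using extrap_bias_norm_le[OF assms(1-4) _ assms(7,8)] assms(6) unfolding K_def by (intro power_mono) auto
  also have "\<dots> \<le> 3 * K\<^sup>2 * (\<theta>\<^sub>1\<^sup>2 / \<gamma>\<^sub>1 ^ 6 + \<theta>\<^sub>2\<^sup>2 / \<gamma>\<^sub>2 ^ 6 + 1)"
    by (rule extrap_remainder_sq_le) (use assms in auto)
  also have "\<dots> = L3\<^sup>2 * norm (x' - x) ^ 6 / 12 * (\<theta>\<^sub>1\<^sup>2 / \<gamma>\<^sub>1 ^ 6 + \<theta>\<^sub>2\<^sup>2 / \<gamma>\<^sub>2 ^ 6 + 1)"
    by (simp add: K_def power2_eq_square algebra_simps)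
  finally show ?thesis .
qed

lemma extrap_bias_scaled_le:
  assumes "0 < \<gamma>\<^sub>1" "\<gamma>\<^sub>1 < 1" "0 < \<gamma>\<^sub>2" "\<gamma>\<^sub>2 < 1" "0 < \<theta>\<^sub>1 + \<theta>\<^sub>2" "\<theta>\<^sub>1 + \<theta>\<^sub>2 < 1"
    and "\<theta>\<^sub>1 / \<gamma>\<^sub>1 + \<theta>\<^sub>2 / \<gamma>\<^sub>2 = 1" "\<theta>\<^sub>1 / \<gamma>\<^sub>1\<^sup>2 + \<theta>\<^sub>2 / \<gamma>\<^sub>2\<^sup>2 = 1" "0 < L3" "0 \<le> q"
    and "norm (x' - x) = \<eta>"
  shows "q * (norm (extrap_bias gradf \<theta>\<^sub>1 \<theta>\<^sub>2 \<gamma>\<^sub>1 \<gamma>\<^sub>2 x' x))\<^sup>2 / (\<theta>\<^sub>1 + \<theta>\<^sub>2)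
    \<le> L3\<^sup>2 * \<eta> ^ 6 * \<theta>\<^sub>1\<^sup>2 * q / (12 * \<gamma>\<^sub>1 ^ 6 * (\<theta>\<^sub>1 + \<theta>\<^sub>2))
      + L3\<^sup>2 * \<eta> ^ 6 * \<theta>\<^sub>2\<^sup>2 * q / (12 * \<gamma>\<^sub>2 ^ 6 * (\<theta>\<^sub>1 + \<theta>\<^sub>2))
      + L3\<^sup>2 * \<eta> ^ 6 * q / (12 * (\<theta>\<^sub>1 + \<theta>\<^sub>2))"
proof -
  have "q * (norm (extrap_bias gradf \<theta>\<^sub>1 \<theta>\<^sub>2 \<gamma>\<^sub>1 \<gamma>\<^sub>2 x' x))\<^sup>2 / (\<theta>\<^sub>1 + \<theta>\<^sub>2)
      \<le> q * (L3\<^sup>2 * \<eta> ^ 6 / 12 * (\<theta>\<^sub>1\<^sup>2 / \<gamma>\<^sub>1 ^ 6 + \<theta>\<^sub>2\<^sup>2 / \<gamma>\<^sub>2 ^ 6 + 1)) / (\<theta>\<^sub>1 + \<theta>\<^sub>2)"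
    using extrap_bias_sq_le[OF assms(1-9), of x' x] assms(5,10,11)
    by (intro divide_right_mono mult_left_mono) auto
  also have "\<dots> = L3\<^sup>2 * \<eta> ^ 6 * \<theta>\<^sub>1\<^sup>2 * q / (12 * \<gamma>\<^sub>1 ^ 6 * (\<theta>\<^sub>1 + \<theta>\<^sub>2))
      + L3\<^sup>2 * \<eta> ^ 6 * \<theta>\<^sub>2\<^sup>2 * q / (12 * \<gamma>\<^sub>2 ^ 6 * (\<theta>\<^sub>1 + \<theta>\<^sub>2))
      + L3\<^sup>2 * \<eta> ^ 6 * q / (12 * (\<theta>\<^sub>1 + \<theta>\<^sub>2))"
    by (simp add: ring_distribs add_divide_distrib mult_ac)
  finally show ?thesis .
qed

end

section \<open>Second moment of the noisy momentum error\<close>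

lemma (in prob_space) integral_sq_norm_add_noise_le:
  fixes c v\<^sub>1 v\<^sub>2 :: "'v::euclidean_space" and G\<^sub>1 G\<^sub>2 :: "'a \<Rightarrow> 'v" and \<theta>\<^sub>1 \<theta>\<^sub>2 \<sigma> :: real
  assumes m: "G\<^sub>1 \<in> borel_measurable M" "G\<^sub>2 \<in> borel_measurable M"
    and i: "integrable M G\<^sub>1" "integrable M G\<^sub>2"
    and e: "integral\<^sup>L M G\<^sub>1 = v\<^sub>1" "integral\<^sup>L M G\<^sub>2 = v\<^sub>2"
    and vi: "integrable M (\<lambda>s. (norm (G\<^sub>1 s - v\<^sub>1))\<^sup>2)" "integrable M (\<lambda>s. (norm (G\<^sub>2 s - v\<^sub>2))\<^sup>2)"
    and v: "integral\<^sup>L M (\<lambda>s. (norm (G\<^sub>1 s - v\<^sub>1))\<^sup>2) \<le> \<sigma>\<^sup>2"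
      "integral\<^sup>L M (\<lambda>s. (norm (G\<^sub>2 s - v\<^sub>2))\<^sup>2) \<le> \<sigma>\<^sup>2"
  defines "N \<equiv> \<lambda>\<xi>. \<theta>\<^sub>1 *\<^sub>R (G\<^sub>1 \<xi> - v\<^sub>1) + \<theta>\<^sub>2 *\<^sub>R (G\<^sub>2 \<xi> - v\<^sub>2)"
  shows "integrable M (\<lambda>\<xi>. (norm (c + N \<xi>))\<^sup>2)"
    and "integral\<^sup>L M (\<lambda>\<xi>. (norm (c + N \<xi>))\<^sup>2) \<le> (norm c)\<^sup>2 + 2 * (\<theta>\<^sub>1\<^sup>2 + \<theta>\<^sub>2\<^sup>2) * \<sigma>\<^sup>2"
proof -
  define F where "F \<xi> = 2 * \<theta>\<^sub>1\<^sup>2 * (norm (G\<^sub>1 \<xi> - v\<^sub>1))\<^sup>2 + 2 * \<theta>\<^sub>2\<^sup>2 * (norm (G\<^sub>2 \<xi> - v\<^sub>2))\<^sup>2" for \<xi>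
  have iN: "integrable M N" unfolding N_def using i by auto
  have eN: "integral\<^sup>L M N = 0" unfolding N_def using i e by (simp add: prob_space)
  have iF: "integrable M F" unfolding F_def using vi by auto
  have "integral\<^sup>L M F = 2 * \<theta>\<^sub>1\<^sup>2 * integral\<^sup>L M (\<lambda>s. (norm (G\<^sub>1 s - v\<^sub>1))\<^sup>2)
      + 2 * \<theta>\<^sub>2\<^sup>2 * integral\<^sup>L M (\<lambda>s. (norm (G\<^sub>2 s - v\<^sub>2))\<^sup>2)"
    unfolding F_def using vi by simp
  also have "\<dots> \<le> 2 * \<theta>\<^sub>1\<^sup>2 * \<sigma>\<^sup>2 + 2 * \<theta>\<^sub>2\<^sup>2 * \<sigma>\<^sup>2"
    using v by (intro add_mono mult_left_mono) auto
  finally have eF: "integral\<^sup>L M F \<le> 2 * (\<theta>\<^sub>1\<^sup>2 + \<theta>\<^sub>2\<^sup>2) * \<sigma>\<^sup>2" by (simp add: algebra_simps)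
  have NF: "(norm (N \<xi>))\<^sup>2 \<le> F \<xi>" for \<xi>
    unfolding N_def F_def by (rule sq_norm_scaleR_add_le)
  have iNN: "integrable M (\<lambda>\<xi>. (norm (N \<xi>))\<^sup>2)"
  proof (rule Bochner_Integration.integrable_bound[OF iF])
    show "(\<lambda>\<xi>. (norm (N \<xi>))\<^sup>2) \<in> borel_measurable M" unfolding N_def using m by measurable
    show "AE x in M. norm ((norm (N x))\<^sup>2) \<le> norm (F x)"
      using NF by (auto intro!: AE_I2 order_trans[OF _ abs_ge_self])
  qed
  have sq: "(norm (c + N \<xi>))\<^sup>2 = (norm c)\<^sup>2 + 2 * (c \<bullet> N \<xi>) + (norm (N \<xi>))\<^sup>2" for \<xi>
    by (simp add: power2_norm_eq_inner inner_add_left inner_add_right inner_commute)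
  have icN: "integrable M (\<lambda>\<xi>. c \<bullet> N \<xi>)" using iN by auto
  show "integrable M (\<lambda>\<xi>. (norm (c + N \<xi>))\<^sup>2)" unfolding sq using icN iNN by auto
  have "integral\<^sup>L M (\<lambda>\<xi>. (norm (c + N \<xi>))\<^sup>2)
      = (norm c)\<^sup>2 + 2 * (c \<bullet> integral\<^sup>L M N) + integral\<^sup>L M (\<lambda>\<xi>. (norm (N \<xi>))\<^sup>2)"
    unfolding sq using icN iNN iN by (simp add: prob_space)
  also have "\<dots> \<le> (norm c)\<^sup>2 + 2 * (\<theta>\<^sub>1\<^sup>2 + \<theta>\<^sub>2\<^sup>2) * \<sigma>\<^sup>2"
    using eN eF integral_mono[OF iNN iF NF] by simp
  finally show "integral\<^sup>L M (\<lambda>\<xi>. (norm (c + N \<xi>))\<^sup>2) \<le> (norm c)\<^sup>2 + 2 * (\<theta>\<^sub>1\<^sup>2 + \<theta>\<^sub>2\<^sup>2) * \<sigma>\<^sup>2" .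
qed

section \<open>One step of the algorithm with two extrapolation points\<close>

lemma sfom_state_cong:
  "(\<And>i. i < j \<Longrightarrow> xi i = xi' i)
    \<Longrightarrow> sfom_state G x0 eta q gam th xi j = sfom_state G x0 eta q gam th xi' j"
proof (induction j)
  case (Suc j)
  then have "sfom_state G x0 eta q gam th xi j = sfom_state G x0 eta q gam th xi' j"
    and "xi j = xi' j" by auto
  then show ?case by (simp add: Let_def split: prod.splits)
qed simp

lemma sfom_state_Suc_eq:
  "sfom_state G x0 eta q gam th xi (Suc k) =
     (sfom_x G x0 eta q gam th xi k, sfom_x G x0 eta q gam th xi (Suc k), sfom_m G x0 eta q gam th xi k)"
  unfolding sfom_x_def sfom_m_def by (simp add: Let_def split: prod.splits)

lemma sfom_x_Suc:
  "sfom_x G x0 eta q gam th xi (Suc k) = sfom_x G x0 eta q gam th xi k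
     - (eta k / norm (sfom_m G x0 eta q gam th xi k)) *\<^sub>R sfom_m G x0 eta q gam th xi k"
  unfolding sfom_x_def sfom_m_def by (simp add: Let_def split: prod.splits)

lemma sfom_x_resample:
  "i \<le> j \<Longrightarrow> sfom_x G x0 eta q gam th (xi(j := \<xi>)) i = sfom_x G x0 eta q gam th xi i"
  unfolding sfom_x_def by (subst sfom_state_cong[where xi'=xi]) auto

lemma sfom_m_resample:
  "i < j \<Longrightarrow> sfom_m G x0 eta q gam th (xi(j := \<xi>)) i = sfom_m G x0 eta q gam th xi i"
  unfolding sfom_m_def by (subst sfom_state_cong[where xi'=xi]) auto

text \<open>The index shift in \<open>gprev\<close>/\<open>thprev\<close> means that step \<open>k + 1\<close> uses the parameters of index \<open>k\<close>.\<close>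

lemma sfom_m_Suc:
  "sfom_m G x0 eta 2 gam th xi (Suc k) =
     (1 - (th k 1 + th k 2)) *\<^sub>R sfom_m G x0 eta 2 gam th xi k
     + th k 1 *\<^sub>R G (extrap (gam k 1) (sfom_x G x0 eta 2 gam th xi (Suc k))
                      (sfom_x G x0 eta 2 gam th xi k)) (xi (Suc k))
     + th k 2 *\<^sub>R G (extrap (gam k 2) (sfom_x G x0 eta 2 gam th xi (Suc k))
                      (sfom_x G x0 eta 2 gam th xi k)) (xi (Suc k))"
proof -
  obtain x\<^sub>k x\<^sub>k\<^sub>1 m\<^sub>k where st: "sfom_state G x0 eta 2 gam th xi (Suc k) = (x\<^sub>k, x\<^sub>k\<^sub>1, m\<^sub>k)"
    by (metis prod_cases3)
  then have iterates: "sfom_x G x0 eta 2 gam th xi k = x\<^sub>k" "sfom_x G x0 eta 2 gam th xi (Suc k) = x\<^sub>k\<^sub>1"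
    "sfom_m G x0 eta 2 gam th xi k = m\<^sub>k"
    using sfom_state_Suc_eq[of G x0 eta 2 gam th xi k] by auto
  have sum2: "sum f {Suc 0..2} = f (Suc 0) + f 2" for f :: "nat \<Rightarrow> 'v::comm_monoid_add"
    by (simp add: numeral_2_eq_2)
  show ?thesis
    unfolding sfom_m_def[of G x0 eta 2 gam th xi "Suc k"]
      sfom_state.simps(2)[of G x0 eta 2 gam th xi "Suc k"] st iterates
    by (simp add: Let_def sum2 gprev_def thprev_def extrap_def add.assoc)
qed

lemma (in prob_space) sfom_expected_momentum_error_le:
  fixes G :: "'v::euclidean_space \<Rightarrow> 'a \<Rightarrow> 'v" and x\<^sub>0 :: 'v and xi :: "nat \<Rightarrow> 'a"
    and eta :: "nat \<Rightarrow> real" and gam th :: "nat \<Rightarrow> nat \<Rightarrow> real"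
  assumes G_meas: "\<forall>x. G x \<in> borel_measurable M"
    and G_int: "\<forall>x. integrable M (G x)"
    and G_unb: "\<forall>x. integral\<^sup>L M (G x) = gradf x"
    and G_var_int: "\<forall>x. integrable M (\<lambda>s. (norm (G x s - gradf x))\<^sup>2)"
    and G_var: "\<forall>x. integral\<^sup>L M (\<lambda>s. (norm (G x s - gradf x))\<^sup>2) \<le> \<sigma>\<^sup>2"
    and s: "0 < th k 1 + th k 2" "th k 1 + th k 2 < 1"
  defines "x \<equiv> sfom_x G x\<^sub>0 eta 2 gam th xi k" and "x' \<equiv> sfom_x G x\<^sub>0 eta 2 gam th xi (Suc k)"
    and "m \<equiv> sfom_m G x\<^sub>0 eta 2 gam th xi k"
    and "E \<equiv> \<lambda>\<xi>. (norm (sfom_m G x\<^sub>0 eta 2 gam th (xi(Suc k := \<xi>)) (Suc k)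
      - gradf (sfom_x G x\<^sub>0 eta 2 gam th (xi(Suc k := \<xi>)) (Suc k))))\<^sup>2"
  shows "integrable M E"
    and "integral\<^sup>L M E \<le> (1 - (th k 1 + th k 2)) * (norm (m - gradf x))\<^sup>2
      + (norm (extrap_bias gradf (th k 1) (th k 2) (gam k 1) (gam k 2) x' x))\<^sup>2 / (th k 1 + th k 2)
      + 2 * ((th k 1)\<^sup>2 + (th k 2)\<^sup>2) * \<sigma>\<^sup>2"
proof -
  define s where "s = th k 1 + th k 2"
  define z\<^sub>1 where "z\<^sub>1 = extrap (gam k 1) x' x"
  define z\<^sub>2 where "z\<^sub>2 = extrap (gam k 2) x' x"
  define c where "c = (1 - s) *\<^sub>R (m - gradf x) + extrap_bias gradf (th k 1) (th k 2) (gam k 1) (gam k 2) x' x"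
  have "sfom_m G x\<^sub>0 eta 2 gam th (xi(Suc k := \<xi>)) (Suc k)
      = (1 - s) *\<^sub>R m + th k 1 *\<^sub>R G z\<^sub>1 \<xi> + th k 2 *\<^sub>R G z\<^sub>2 \<xi>" for \<xi>
    by (simp add: sfom_m_Suc sfom_x_resample sfom_m_resample x_def x'_def m_def s_def z\<^sub>1_def z\<^sub>2_def)
  then have "sfom_m G x\<^sub>0 eta 2 gam th (xi(Suc k := \<xi>)) (Suc k) - gradf x'
      = c + (th k 1 *\<^sub>R (G z\<^sub>1 \<xi> - gradf z\<^sub>1) + th k 2 *\<^sub>R (G z\<^sub>2 \<xi> - gradf z\<^sub>2))" for \<xi>
    unfolding c_def extrap_bias_def z\<^sub>1_def[symmetric] z\<^sub>2_def[symmetric] s_def[symmetric]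
    by (simp add: algebra_simps)
  then have E: "E = (\<lambda>\<xi>. (norm (c + (th k 1 *\<^sub>R (G z\<^sub>1 \<xi> - gradf z\<^sub>1) + th k 2 *\<^sub>R (G z\<^sub>2 \<xi> - gradf z\<^sub>2))))\<^sup>2)"
    unfolding E_def x'_def by (simp add: sfom_x_resample)
  note bound = integral_sq_norm_add_noise_le[of "G z\<^sub>1" "G z\<^sub>2" "gradf z\<^sub>1" "gradf z\<^sub>2" \<sigma> c "th k 1" "th k 2"]
  show "integrable M E"
    unfolding E by (rule bound(1)) (use assms in auto)
  have "integral\<^sup>L M E \<le> (norm c)\<^sup>2 + 2 * ((th k 1)\<^sup>2 + (th k 2)\<^sup>2) * \<sigma>\<^sup>2"
    unfolding E by (rule bound(2)) (use assms in auto)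
  moreover have "(norm c)\<^sup>2 \<le> (1 - s) * (norm (m - gradf x))\<^sup>2
      + (norm (extrap_bias gradf (th k 1) (th k 2) (gam k 1) (gam k 2) x' x))\<^sup>2 / s"
    unfolding c_def by (rule sq_norm_contraction_add_le) (use s in \<open>auto simp: s_def\<close>)
  ultimately show "integral\<^sup>L M E \<le> (1 - (th k 1 + th k 2)) * (norm (m - gradf x))\<^sup>2
      + (norm (extrap_bias gradf (th k 1) (th k 2) (gam k 1) (gam k 2) x' x))\<^sup>2 / (th k 1 + th k 2)
      + 2 * ((th k 1)\<^sup>2 + (th k 2)\<^sup>2) * \<sigma>\<^sup>2"
    unfolding s_def by linarith
qed

text \<open>
  The Lyapunov bookkeeping: half of the contraction \<open>s\<close> pays, via Young's inequality, for the
  cross term \<open>2\<eta>e\<close> of the descent step; the recursion \<open>(1 - s) p' \<le> (1 - s/2) p\<close> supplies it.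
\<close>

lemma potential_step_le:
  fixes f f' \<eta> g e E b V L s p p' :: real
  assumes descent: "f' \<le> f - \<eta> * g + 2 * \<eta> * e + L / 2 * \<eta>\<^sup>2"
    and error: "E \<le> (1 - s) * e\<^sup>2 + b / s + V"
    and rec: "(1 - s) * p' \<le> (1 - s / 2) * p"
    and "0 < s" "s < 1" "0 < p" "0 < p'"
  shows "f' + p' * E \<le> f + p * e\<^sup>2 - \<eta> * g + L / 2 * \<eta>\<^sup>2 + 2 * \<eta>\<^sup>2 / (s * p) + p' * b / s + p' * V"
proof -
  have "2 * e * \<eta> \<le> s * p / 2 * e\<^sup>2 + \<eta>\<^sup>2 / (s * p / 2)"
    by (rule two_mult_le_weighted_squares) (use assms(4,6) in simp)
  then have "2 * \<eta> * e \<le> s * p / 2 * e\<^sup>2 + 2 * \<eta>\<^sup>2 / (s * p)" by (simp add: mult_ac)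
  moreover have "p' * E \<le> (1 - s) * p' * e\<^sup>2 + p' * b / s + p' * V"
    using mult_left_mono[OF error, of p'] assms(7) by (simp add: algebra_simps)
  moreover have "(1 - s) * p' * e\<^sup>2 \<le> (1 - s / 2) * p * e\<^sup>2"
    using mult_right_mono[OF rec, of "e\<^sup>2"] by simp
  moreover have "(1 - s / 2) * p * e\<^sup>2 + s * p / 2 * e\<^sup>2 = p * e\<^sup>2" by (simp add: algebra_simps)
  ultimately show ?thesis using descent by linarith
qed

theorem theorem3p3:
  fixes M :: "'s measure"
    and f :: "'a::euclidean_space \<Rightarrow> real" and gradf :: "'a \<Rightarrow> 'a"
    and D2 :: "'a \<Rightarrow> 'a \<Rightarrow> 'a \<Rightarrow> real" and D3 :: "'a \<Rightarrow> 'a \<Rightarrow> 'a \<Rightarrow> 'a \<Rightarrow> real"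
    and G :: "'a \<Rightarrow> 's \<Rightarrow> 'a"
    and flow L1 L3 \<sigma> :: real
    and x0 :: 'a and eta :: "nat \<Rightarrow> real" and gam th :: "nat \<Rightarrow> nat \<Rightarrow> real"
    and p :: "nat \<Rightarrow> real" and xi :: "nat \<Rightarrow> 's" and k :: nat
  assumes M: "prob_space M"
    \<comment> \<open>Assumption A\<close>
    and A_low: "\<forall>x. f x \<ge> flow"
    and grad: "\<forall>x. (f has_derivative (\<lambda>h. gradf x \<bullet> h)) (at x)"
    and L1: "L1 > 0" and A_lip: "\<forall>x y. norm (gradf y - gradf x) \<le> L1 * norm (y - x)"
    and G_meas: "\<forall>x. G x \<in> borel_measurable M"
    and G_int: "\<forall>x. integrable M (G x)"
    and G_unb: "\<forall>x. integral\<^sup>L M (G x) = gradf x"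
    and G_var_int: "\<forall>x. integrable M (\<lambda>s. (norm (G x s - gradf x))\<^sup>2)"
    and G_var: "\<forall>x. integral\<^sup>L M (\<lambda>s. (norm (G x s - gradf x))\<^sup>2) \<le> \<sigma>\<^sup>2"
    and sigma: "\<sigma> > 0"
    \<comment> \<open>Assumption B with p = 3\<close>
    and D2: "\<forall>x h1. ((\<lambda>y. gradf y \<bullet> h1) has_derivative (\<lambda>h. D2 x h1 h)) (at x)"
    and D3: "\<forall>x h1 h2. ((\<lambda>y. D2 y h1 h2) has_derivative (\<lambda>h. D3 x h1 h2 h)) (at x)"
    and D3_cont: "\<forall>h1 h2 h3. continuous_on UNIV (\<lambda>x. D3 x h1 h2 h3)"
    and L3: "L3 > 0"
    and B_lip: "\<forall>x y. tnorm3 (\<lambda>h1 h2 h3. D3 y h1 h2 h3 - D3 x h1 h2 h3) \<le> L3 * norm (y - x)"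
    \<comment> \<open>Algorithm 1 parameters, q = 2\<close>
    and eta_pos: "\<forall>j. eta j > 0"
    and gam_range: "\<forall>j t. t \<in> {1..2} \<longrightarrow> gam j t \<in> {0<..<1}"
    and th_sum: "\<forall>j. th j 1 + th j 2 \<in> {0<..<1}"
    and cond1: "\<forall>j. th j 1 / gam j 1 + th j 2 / gam j 2 = 1"
    and cond2: "\<forall>j. th j 1 / (gam j 1)\<^sup>2 + th j 2 / (gam j 2)\<^sup>2 = 1"
    and p_pos: "\<forall>j. p j > 0"
    and p_rec: "\<forall>j. (1 - th j 1 - th j 2) * p (Suc j) \<le> (1 - (th j 1 + th j 2) / 2) * p j"
    \<comment> \<open>realized samples xi^0, xi^1, ... and nonvanishing m^j up to step k\<close>
    and xi_sp: "\<forall>j. xi j \<in> space M"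
    and m_nz: "\<forall>j\<le>k. sfom_m G x0 eta 2 gam th xi j \<noteq> 0"
  shows
    "let X = sfom_x G x0 eta 2 gam th; Mm = sfom_m G x0 eta 2 gam th;
         P = (\<lambda>path j. f (X path j) + p j * (norm (Mm path j - gradf (X path j)))\<^sup>2);
         s = th k 1 + th k 2
     in integrable M (\<lambda>\<xi>. P (xi(Suc k := \<xi>)) (Suc k)) \<and>
        integral\<^sup>L M (\<lambda>\<xi>. P (xi(Suc k := \<xi>)) (Suc k))
        \<le> P xi k - eta k * norm (gradf (X xi k)) + L1 / 2 * (eta k)\<^sup>2
           + 2 * (eta k)\<^sup>2 / (s * p k)
           + L3\<^sup>2 * eta k ^ 6 * (th k 1)\<^sup>2 * p (Suc k) / (12 * gam k 1 ^ 6 * s)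
           + L3\<^sup>2 * eta k ^ 6 * (th k 2)\<^sup>2 * p (Suc k) / (12 * gam k 2 ^ 6 * s)
           + L3\<^sup>2 * eta k ^ 6 * p (Suc k) / (12 * s)
           + 2 * ((th k 1)\<^sup>2 + (th k 2)\<^sup>2) * p (Suc k) * \<sigma>\<^sup>2"
proof -
  interpret prob_space M by (rule M)
  define x where "x = sfom_x G x0 eta 2 gam th xi k"
  define x' where "x' = sfom_x G x0 eta 2 gam th xi (Suc k)"
  define m where "m = sfom_m G x0 eta 2 gam th xi k"
  define s where "s = th k 1 + th k 2"
  define E where "E = (\<lambda>\<xi>. (norm (sfom_m G x0 eta 2 gam th (xi(Suc k := \<xi>)) (Suc k)
      - gradf (sfom_x G x0 eta 2 gam th (xi(Suc k := \<xi>)) (Suc k))))\<^sup>2)"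
  have s: "0 < s" "s < 1" and \<gamma>: "0 < gam k 1" "gam k 1 < 1" "0 < gam k 2" "gam k 2 < 1"
    and \<eta>: "0 < eta k" and p: "0 < p k" "0 < p (Suc k)"
    using th_sum gam_range eta_pos p_pos unfolding s_def by auto
  have step: "x' = x - (eta k / norm m) *\<^sub>R m" and "m \<noteq> 0"
    unfolding x_def x'_def m_def using sfom_x_Suc m_nz by auto
  have descent: "f x' \<le> f x - eta k * norm (gradf x) + 2 * eta k * norm (m - gradf x) + L1 / 2 * (eta k)\<^sup>2"
    unfolding step using normalized_step_descent[OF grad A_lip \<open>m \<noteq> 0\<close>] \<eta> by simp
  note error = sfom_expected_momentum_error_le[where th=th and k=k and x\<^sub>0=x0 and eta=eta and xi=xi and gam=gam,
      OF G_meas G_int G_unb G_var_int G_var s[unfolded s_def], folded x_def x'_def m_def s_def E_def]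
  have "norm (x' - x) = eta k" using step \<open>m \<noteq> 0\<close> \<eta> by simp
  note bias = extrap_bias_scaled_le[OF D2 D3 B_lip \<gamma> s[unfolded s_def] cond1[rule_format] cond2[rule_format]
      L3 less_imp_le[OF p(2)] this, folded s_def]
  have "(1 - s) * p (Suc k) \<le> (1 - s / 2) * p k"
    using p_rec[rule_format, of k] by (simp add: s_def algebra_simps)
  note potential = potential_step_le[OF descent error(2) this s p]
  have resample: "(\<lambda>\<xi>. f (sfom_x G x0 eta 2 gam th (xi(Suc k := \<xi>)) (Suc k))
      + p (Suc k) * (norm (sfom_m G x0 eta 2 gam th (xi(Suc k := \<xi>)) (Suc k)
         - gradf (sfom_x G x0 eta 2 gam th (xi(Suc k := \<xi>)) (Suc k))))\<^sup>2)
      = (\<lambda>\<xi>. f x' + p (Suc k) * E \<xi>)"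
    by (simp add: E_def x'_def sfom_x_resample)
  have expectation: "integral\<^sup>L M (\<lambda>\<xi>. f x' + p (Suc k) * E \<xi>) = f x' + p (Suc k) * integral\<^sup>L M E"
    using error(1) by (simp add: prob_space)
  show ?thesis
    unfolding Let_def resample expectation x_def[symmetric] m_def[symmetric] s_def[symmetric]
    using error(1) potential bias by (simp add: algebra_simps)
qed

end
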